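(* Let $\tau\ge1$ be an integer and $h(z;\lambda)=z^{\tau+1}-z^{\tau}+\lambda$. Let $I\subseteq(0,\infty)$ be an interval and $z:I\to\mathbb C\setminus\mathbb R$ a continuous function with $h(z(\lambda);\lambda)=0$ for all $\lambda\in I$. Then $\lambda\mapsto|z(\lambda)|$ is strictly increasing on $I$. (That is, all roots of $h(\cdot;\lambda)$ with nonzero imaginary part have modulus increasing with $\lambda$.) *)

theory Defs
  imports "HOL-Analysis.Analysis"
begin

definition hpoly :: "nat \<Rightarrow> complex \<Rightarrow> real \<Rightarrow> complex" where
  "hpoly \<tau> z lam = z ^ (\<tau> + 1) - z ^ \<tau> + complex_of_real lam"

end

theory Submission
  imports Defs
begin

text \<open>
  Differentiating \<open>z(\<lambda>)\<^sup>\<tau> (1 - z(\<lambda>)) = \<lambda>\<close> implicitly gives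
  \<open>d|z|\<^sup>2/d\<lambda> = -2 Re (z\<^sup>\<tau> - (\<tau>+1)\<lambda>) / |h'(z)|\<^sup>2\<close>, so it suffices to show
  \<open>Re (z\<^sup>\<tau>) < (\<tau>+1)\<lambda>\<close> at every non-real root.  Since \<open>z\<^sup>\<tau> = \<lambda>/(1-z)\<close>, the
  opposite inequality confines \<open>1 - z\<close> to a small disc, where \<open>\<tau> |1 - z| < |z|\<close>.
  For \<open>Im z > 0\<close> this makes \<open>0 < -arg (1 - z) - \<tau> arg z < \<pi>/2\<close>, contradicting that
  \<open>z\<^sup>\<tau> (1 - z)\<close> is a positive real.  The derivative itself is obtained from the
  divided difference of \<open>h\<close>, which avoids the implicit function theorem.
\<close>

lemma abs_sin_of_nat_mult_le: "\<bar>sin (real n * t)\<bar> \<le> real n * \<bar>sin t\<bar>"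
proof (induction n)
  case 0
  then show ?case by simp
next
  case (Suc n)
  have "sin (real (Suc n) * t) = sin (real n * t) * cos t + cos (real n * t) * sin t"
    by (simp add: distrib_right sin_add)
  also have "\<bar>\<dots>\<bar> \<le> \<bar>sin (real n * t)\<bar> + \<bar>sin t\<bar>"
  proof -
    have "\<bar>sin (real n * t) * cos t\<bar> \<le> \<bar>sin (real n * t)\<bar>"
      by (simp add: abs_mult mult_left_le)
    moreover have "\<bar>cos (real n * t) * sin t\<bar> \<le> \<bar>sin t\<bar>"
      by (metis abs_ge_zero abs_cos_le_one mult_left_le_one_le abs_mult)
    ultimately show ?thesis by linarith
  qed
  finally show ?case using Suc.IH by (simp add: distrib_right)
qed

lemma of_nat_mult_less_of_mult_sin_less:
  assumes "n \<ge> 1" "0 < d" "d < pi/2" "0 < g" "g < pi/2" "real n * sin d < sin g"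
  shows "real n * d < g"
proof -
  have n: "real n \<ge> 1" using assms(1) by simp
  have g_n: "0 < g / real n" "g / real n \<le> g"
    using n assms(4) by (auto simp: divide_simps)
  have "sin g = sin (real n * (g / real n))" using n by simp
  also have "\<dots> \<le> real n * sin (g / real n)"
    using abs_sin_of_nat_mult_le[of n "g / real n"] sin_ge_zero[of "g / real n"] g_n assms(5)
    by auto
  finally have "real n * sin d < real n * sin (g / real n)" using assms(6) by linarith
  then have "sin d < sin (g / real n)" using n by simp
  then have "d < g / real n"
    using sin_mono_less_eq[of d "g / real n"] assms(2,3,5) g_n by linarith
  then show ?thesis using n by (simp add: divide_simps mult.commute)
qed

lemma bounds_of_Re_inverse_one_minus_ge:
  fixes z :: complex and c :: real
  assumes "Im z \<noteq> 0" "c \<ge> 0" "c + 1 \<le> Re (1 / (1 - z))"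
  shows "0 < Re z" "0 < Re (1 - z)" "c * cmod (1 - z) < cmod z"
proof -
  define a where "a = Re (1 - z)"
  define q2 where "q2 = (cmod (1 - z))\<^sup>2"
  define r2 where "r2 = (cmod z)\<^sup>2"
  have q2: "q2 = a\<^sup>2 + (Im z)\<^sup>2" "r2 = (1 - a)\<^sup>2 + (Im z)\<^sup>2"
    unfolding q2_def r2_def a_def cmod_power2 by simp_all
  have q2_gt: "a\<^sup>2 < q2" using q2 assms(1) by simp
  then have "0 < q2" using zero_le_power2[of a] by linarith
  have "Re (1 / (1 - z)) = a / q2" unfolding a_def q2_def by (simp add: Re_divide cmod_power2)
  then have "(c + 1) * q2 \<le> a"
    using assms(3) \<open>0 < q2\<close> by (simp add: le_divide_eq)
  moreover have "q2 \<le> (c + 1) * q2" using assms(2) \<open>0 < q2\<close> by (simp add: algebra_simps)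
  ultimately have "a\<^sup>2 < a" "c * q2 \<le> a - q2" using q2_gt by (auto simp: algebra_simps)
  have a: "0 < a" using \<open>a\<^sup>2 < a\<close> zero_le_power2[of a] by linarith
  then have "a < 1" using \<open>a\<^sup>2 < a\<close> mult_less_cancel_left_pos[of a a 1] by (simp add: power2_eq_square)
  with a show "0 < Re z" "0 < Re (1 - z)" unfolding a_def by simp_all
  have "r2 * q2 = (a - q2)\<^sup>2 + (Im z)\<^sup>2" unfolding q2 by (simp add: power2_eq_square algebra_simps)
  moreover have "(c * q2)\<^sup>2 \<le> (a - q2)\<^sup>2"
    using \<open>c * q2 \<le> a - q2\<close> assms(2) \<open>0 < q2\<close> by (intro power_mono) auto
  moreover have "0 < (Im z)\<^sup>2" using assms(1) by simp
  moreover have "(c * q2)\<^sup>2 = (c\<^sup>2 * q2) * q2" by (simp add: power2_eq_square)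
  ultimately have "(c\<^sup>2 * q2) * q2 < r2 * q2" by linarith
  then have "c\<^sup>2 * q2 < r2" using \<open>0 < q2\<close> by simp
  then have "(c * cmod (1 - z))\<^sup>2 < (cmod z)\<^sup>2"
    unfolding q2_def r2_def by (simp add: power_mult_distrib)
  then show "c * cmod (1 - z) < cmod z" by (rule power_less_imp_less_base) simp
qed

lemma Im_power_mult_one_minus_neg:
  fixes z :: complex
  assumes "n \<ge> 1" "0 < Im z" "0 < Re z" "0 < Re (1 - z)" "real n * cmod (1 - z) < cmod z"
  shows "Im (z ^ n * (1 - z)) < 0"
proof -
  define d where "d = Arg z"
  define g where "g = - Arg (1 - z)"
  have z: "z \<noteq> 0" "1 - z \<noteq> 0" using assms(2) by auto
  have d: "0 < d" "d < pi/2"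
    using Arg_lt_pi[of z] Arg_Re_pos[of z] assms(2,3) unfolding d_def by auto
  have g: "0 < g" "g < pi/2"
    using Arg_neg_iff[of "1 - z"] Arg_Re_pos[of "1 - z"] assms(2,4) unfolding g_def by auto
  have "real n * (Im z / cmod z) < Im z / cmod (1 - z)"
    using assms(2,5) z by (simp add: field_simps mult_strict_left_mono)
  then have "real n * sin d < sin g"
    unfolding d_def g_def using sin_Arg[OF z(1)] sin_Arg[OF z(2)] by simp
  then have "real n * d < g" by (rule of_nat_mult_less_of_mult_sin_less[OF assms(1) d g])
  moreover have "0 \<le> real n * d" using d by simp
  ultimately have "0 < sin (g - real n * d)" using g by (intro sin_gt_zero) auto
  then have "sin (real n * d - g) < 0" using sin_minus[of "g - real n * d"] by simp
  have "z ^ n * (1 - z) = rcis (cmod z ^ n * cmod (1 - z)) (real n * d - g)"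
    unfolding d_def g_def
    by (metis DeMoivre2 minus_minus rcis_cmod_Arg rcis_mult diff_conv_add_uminus)
  then show ?thesis
    using \<open>sin (real n * d - g) < 0\<close> z by (simp add: mult_pos_neg)
qed

lemma Re_power_less_of_power_mult_one_minus_eq:
  fixes z :: complex
  assumes "\<tau> \<ge> 1" "Im z \<noteq> 0" "0 < lam" "z ^ \<tau> * (1 - z) = of_real lam"
  shows "Re (z ^ \<tau>) < (real \<tau> + 1) * lam"
proof -
  have upper_root: "Re (w ^ \<tau>) < (real \<tau> + 1) * lam"
    if w: "0 < Im w" "w ^ \<tau> * (1 - w) = of_real lam" for w :: complex
  proof (rule ccontr)
    assume "\<not> ?thesis"
    have "1 - w \<noteq> 0" using w(1) by auto
    then have "w ^ \<tau> = of_real lam * (1 / (1 - w))"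
      using w(2) by (simp add: field_simps)
    then have "Re (w ^ \<tau>) = lam * Re (1 / (1 - w))"
      by (simp only: times_complex.sel Re_complex_of_real Im_complex_of_real)
    with \<open>\<not> ?thesis\<close> have "real \<tau> + 1 \<le> Re (1 / (1 - w))"
      using assms(3) by (simp add: mult.commute)
    note bounds = bounds_of_Re_inverse_one_minus_ge[OF _ _ this]
    have "Im (w ^ \<tau> * (1 - w)) < 0"
      using w(1) bounds by (intro Im_power_mult_one_minus_neg[OF assms(1)]) auto
    then show False using w(2) by simp
  qed
  show ?thesis
  proof (cases "0 < Im z")
    case True
    then show ?thesis using upper_root assms(4) by blast
  next
    case False
    have "cnj z ^ \<tau> * (1 - cnj z) = of_real lam"
      using arg_cong[OF assms(4), of cnj] by simp
    then have "Re (cnj z ^ \<tau>) < (real \<tau> + 1) * lam"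
      using False assms(2) by (intro upper_root) auto
    then show ?thesis by (simp flip: complex_cnj_power)
  qed
qed

lemma hpoly_eq_0_iff: "hpoly \<tau> z lam = 0 \<longleftrightarrow> z ^ \<tau> * (1 - z) = of_real lam"
  unfolding hpoly_def by (auto simp: algebra_simps eq_neg_iff_add_eq_0)

definition hpoly_quot :: "nat \<Rightarrow> complex \<Rightarrow> complex \<Rightarrow> complex" where
  "hpoly_quot \<tau> u v =
    (\<Sum>i<\<tau>+1. v ^ (\<tau> + 1 - Suc i) * u ^ i) - (\<Sum>i<\<tau>. v ^ (\<tau> - Suc i) * u ^ i)"

lemma hpoly_diff:
  "hpoly \<tau> u a - hpoly \<tau> v b = (u - v) * hpoly_quot \<tau> u v + of_real (a - b)"
  unfolding hpoly_quot_def hpoly_def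
  using power_diff_sumr2[of u "\<tau> + 1" v] power_diff_sumr2[of u \<tau> v]
  by (simp add: algebra_simps)

lemma hpoly_quot_diag: "hpoly_quot \<tau> v v = of_nat (\<tau> + 1) * v ^ \<tau> - of_nat \<tau> * v ^ (\<tau> - 1)"
proof -
  have sum_eq: "(\<Sum>i<n. v ^ (n - Suc i) * v ^ i) = of_nat n * v ^ (n - 1)" for n
    by (simp add: power_add[symmetric])
  show ?thesis by (simp only: hpoly_quot_def sum_eq) simp
qed

lemma Re_mult_hpoly_quot_diag_neg:
  assumes "\<tau> \<ge> 1" "Im z \<noteq> 0" "0 < lam" "hpoly \<tau> z lam = 0"
  shows "Re (z * hpoly_quot \<tau> z z) < 0"
proof -
  have root: "z ^ \<tau> * (1 - z) = of_real lam" using assms(4) by (simp add: hpoly_eq_0_iff)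
  have "z * hpoly_quot \<tau> z z = of_nat (\<tau> + 1) * (z * z ^ \<tau>) - of_nat \<tau> * (z * z ^ (\<tau> - 1))"
    unfolding hpoly_quot_diag by (simp add: algebra_simps)
  also have "z * z ^ (\<tau> - 1) = z ^ \<tau>" using assms(1) by (simp flip: power_Suc)
  also have "z * z ^ \<tau> = z ^ \<tau> - of_real lam" using root by (simp add: algebra_simps)
  finally have "z * hpoly_quot \<tau> z z = z ^ \<tau> - of_real ((real \<tau> + 1) * lam)"
    by (simp add: algebra_simps)
  then show ?thesis
    using Re_power_less_of_power_mult_one_minus_eq[OF assms(1-3) root] by simp
qed

lemma cmod_sq_diff_quotient:
  assumes "hpoly \<tau> u a = 0" "hpoly \<tau> v b = 0" "a \<noteq> b"
  shows "((cmod u)\<^sup>2 - (cmod v)\<^sup>2) / (a - b) = Re (- cnj (u + v) / hpoly_quot \<tau> u v)"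
proof -
  have diff: "(u - v) * hpoly_quot \<tau> u v = - of_real (a - b)"
    using hpoly_diff[of \<tau> u a v b] assms(1,2) by (simp add: algebra_simps)
  then have "hpoly_quot \<tau> u v \<noteq> 0" using assms(3) by auto
  with diff have "u - v = - of_real (a - b) / hpoly_quot \<tau> u v"
    by (simp add: field_simps)
  have "(cmod u)\<^sup>2 - (cmod v)\<^sup>2 = Re ((u - v) * cnj (u + v))"
    by (simp only: cmod_power2) (simp add: algebra_simps power2_eq_square)
  also have "\<dots> = Re (of_real (a - b) * (- cnj (u + v) / hpoly_quot \<tau> u v))"
    unfolding \<open>u - v = _\<close> by (simp add: algebra_simps)
  also have "\<dots> = (a - b) * Re (- cnj (u + v) / hpoly_quot \<tau> u v)"
    by (simp only: times_complex.sel Re_complex_of_real Im_complex_of_real)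
  finally show ?thesis using assms(3) by simp
qed

lemma has_real_derivative_cmod_sq_root:
  fixes z :: "real \<Rightarrow> complex"
  assumes "isCont z x" "hpoly_quot \<tau> (z x) (z x) \<noteq> 0"
    and "\<forall>\<^sub>F l in at x. hpoly \<tau> (z l) l = 0" "hpoly \<tau> (z x) x = 0"
  shows "((\<lambda>l. (cmod (z l))\<^sup>2) has_real_derivative
           Re (- cnj (z x + z x) / hpoly_quot \<tau> (z x) (z x))) (at x)"
proof -
  have z: "(z \<longlongrightarrow> z x) (at x)" using assms(1) by (simp add: isCont_def)
  have Q: "((\<lambda>l. hpoly_quot \<tau> (z l) (z x)) \<longlongrightarrow> hpoly_quot \<tau> (z x) (z x)) (at x)"
    unfolding hpoly_quot_def by (intro tendsto_intros z)
  have lim: "((\<lambda>l. Re (- cnj (z l + z x) / hpoly_quot \<tau> (z l) (z x)))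
      \<longlongrightarrow> Re (- cnj (z x + z x) / hpoly_quot \<tau> (z x) (z x))) (at x)"
    by (intro tendsto_intros z Q assms(2))
  have "\<forall>\<^sub>F l in at x. Re (- cnj (z l + z x) / hpoly_quot \<tau> (z l) (z x))
      = ((cmod (z l))\<^sup>2 - (cmod (z x))\<^sup>2) / (l - x)"
    using eventually_conj[OF assms(3) eventually_neq_at_within[of x x UNIV]]
    by eventually_elim (simp add: cmod_sq_diff_quotient[OF _ assms(4)])
  then show ?thesis
    unfolding has_field_derivative_iff by (rule Lim_transform_eventually[OF lim])
qed

lemma cmod_sq_root_derivative_pos:
  assumes "\<tau> \<ge> 1" "Im z \<noteq> 0" "0 < lam" "hpoly \<tau> z lam = 0"
  shows "0 < Re (- cnj (z + z) / hpoly_quot \<tau> z z)"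
proof -
  have neg: "Re (z * hpoly_quot \<tau> z z) < 0" by (rule Re_mult_hpoly_quot_diag_neg[OF assms])
  then have "hpoly_quot \<tau> z z \<noteq> 0" by auto
  have "Re (- cnj (z + z) / hpoly_quot \<tau> z z)
      = - 2 * Re (z * hpoly_quot \<tau> z z) / (cmod (hpoly_quot \<tau> z z))\<^sup>2"
    by (simp add: Re_divide cmod_power2 algebra_simps diff_divide_distrib)
  then show ?thesis using neg \<open>hpoly_quot \<tau> z z \<noteq> 0\<close> by (simp add: divide_pos_pos)
qed

lemma cmod_sq_root_has_pos_derivative:
  fixes z :: "real \<Rightarrow> complex"
  assumes "\<tau> \<ge> 1" "x \<in> interior I" "I \<subseteq> {0<..}" "continuous_on I z"
    and "\<And>lam. lam \<in> I \<Longrightarrow> Im (z lam) \<noteq> 0"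
    and "\<And>lam. lam \<in> I \<Longrightarrow> hpoly \<tau> (z lam) lam = 0"
  shows "\<exists>D. ((\<lambda>l. (cmod (z l))\<^sup>2) has_real_derivative D) (at x) \<and> 0 < D"
proof -
  have x: "x \<in> I" "0 < x" using assms(2,3) interior_subset by blast+
  have cont: "isCont z x" using continuous_on_interior[OF assms(4,2)] .
  have "\<forall>\<^sub>F l in at x. l \<in> interior I" using assms(2) by (intro eventually_at_in_open') auto
  then have near: "\<forall>\<^sub>F l in at x. hpoly \<tau> (z l) l = 0"
    by (rule eventually_mono) (use interior_subset in \<open>blast intro: assms(6)\<close>)
  note root = assms(5,6)[OF x(1)]
  have pos: "0 < Re (- cnj (z x + z x) / hpoly_quot \<tau> (z x) (z x))"
    by (rule cmod_sq_root_derivative_pos[OF assms(1) root(1) x(2) root(2)])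
  then have "hpoly_quot \<tau> (z x) (z x) \<noteq> 0" by auto
  with pos show ?thesis using has_real_derivative_cmod_sq_root[OF cont _ near root(2)] by blast
qed

theorem lemma3:
  fixes \<tau> :: nat and I :: "real set" and z :: "real \<Rightarrow> complex"
  assumes "\<tau> \<ge> 1"
    and "is_interval I" and "I \<subseteq> {0<..}"
    and "continuous_on I z"
    and "\<And>lam. lam \<in> I \<Longrightarrow> Im (z lam) \<noteq> 0"
    and "\<And>lam. lam \<in> I \<Longrightarrow> hpoly \<tau> (z lam) lam = 0"
  shows "strict_mono_on I (\<lambda>lam. cmod (z lam))"
proof (rule strict_mono_onI)
  fix a b assume ab: "a \<in> I" "b \<in> I" "a < b"
  have sub: "{a..b} \<subseteq> I" using mem_is_interval_1_I[OF assms(2) ab(1,2)] by auto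
  have "(cmod (z a))\<^sup>2 < (cmod (z b))\<^sup>2"
  proof (rule DERIV_pos_imp_increasing_open[OF ab(3)])
    fix x assume "a < x" "x < b"
    then have "x \<in> interior I" using interior_mono[OF sub] by auto
    then show "\<exists>D. ((\<lambda>l. (cmod (z l))\<^sup>2) has_real_derivative D) (at x) \<and> 0 < D"
      by (rule cmod_sq_root_has_pos_derivative[OF assms(1) _ assms(3-6)])
  next
    show "continuous_on {a..b} (\<lambda>l. (cmod (z l))\<^sup>2)"
      using continuous_on_subset[OF assms(4) sub] by (intro continuous_intros)
  qed
  then show "cmod (z a) < cmod (z b)" by (rule power_less_imp_less_base) simp
qed

end
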